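(* Let $F\in\{\mathbb{R},\mathbb{C}\}$. (1) Let $\Theta$ satisfy $\cos\Theta>0$ (for $F=\mathbb{R}$, $\Theta=0$). For $a,b\in F$ define $$a+_{\infty,\Theta}b=\lim_{|\alpha|\to\infty,\ \arg\alpha=\Theta}\epsilon_\alpha^{-1}\big(\epsilon_\alpha(a)+\epsilon_\alpha(b)\big).$$ Then $(F,+_{\infty,\Theta},\cdot)$ is a non-associative field. Moreover, for $a_1,\dots,a_n\in F$, writing $a_t=|a_t|e^{i\theta_t}$, $[n]_k=\{t\in[n]:|a_t|=|a_k|\}$ and $\sum_{t\in[n]_k}e^{i\theta_t}=r_ks_k$ with $r_k\ge0$, $|s_k|=1$, the limit $${}^{\infty,\Theta}\!\sum_{k\in[n]}a_k:=\lim_{|\alpha|\to\infty,\ \arg\alpha=\Theta}\epsilon_\alpha^{-1}\Big(\sum_{k\in[n]}\epsilon_\alpha(a_k)\Big)$$ equals $|a_M|\,r_M^{-i\tan\Theta}s_M$ if there is $M\in[n]$ with $|a_M|=\max\{|a_k|: k\in[n],\ a_k\neq0,\ r_k\neq0\}$, and equals $0$ otherwise. (2) Let $\Theta$ satisfy $\cos\Theta<0$ (for $F=\mathbb{R}$, $\Theta=\pi$). Define $a+_{-\infty,\Theta}b$ by the same limit with $|\alpha|\to\infty$, $\arg\alpha=\Theta$ (so $\mathrm{Re}\,\alpha\to-\infty$). Then $(F,+_{-\infty,\Theta},\cdot)$ is a non-associative field, and, with the same notation, the corresponding limit ${}^{-\infty,\Theta}\!\sum_{k\in[n]}a_k$ equals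 $|a_m|\,r_m^{-i\tan\Theta}s_m$ if there is $m\in[n]$ with $|a_m|=\min\{|a_k|:k\in[n],\ a_k\neq0,\ r_k\neq0\}$, and equals $0$ otherwise.
   Context: For $\alpha\in\mathbb{C}\setminus i\mathbb{R}$, $\epsilon_\alpha:\mathbb{C}\to\mathbb{C}$ is defined by $\epsilon_\alpha(0)=0$ and $\epsilon_\alpha(rs)=r^\alpha s=e^{\alpha\ln r}s$ for $r>0$, $|s|=1$; it is a multiplicative automorphism with inverse $\epsilon_\alpha^{-1}(\rho t)=\rho^{(1-i\,\mathrm{Im}\alpha)/\mathrm{Re}\alpha}t$. For real $\alpha\neq0$, $\epsilon_\alpha:\mathbb{R}\to\mathbb{R}$ is $x\mapsto\mathrm{sgn}(x)|x|^\alpha$. A non-associative field is a structure $(F,+,\cdot)$ satisfying all field axioms except that addition is not required to be associative. *)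

theory Defs
  imports "HOL-Analysis.Analysis"
begin

definition eps :: "complex \<Rightarrow> complex \<Rightarrow> complex" where
  "eps \<alpha> z = (if z = 0 then 0 else (complex_of_real (cmod z)) powr \<alpha> * sgn z)"

definition eps_inv :: "complex \<Rightarrow> complex \<Rightarrow> complex" where
  "eps_inv \<alpha> w = (if w = 0 then 0 else
     (complex_of_real (cmod w)) powr ((1 - \<i> * of_real (Im \<alpha>)) / of_real (Re \<alpha>)) * sgn w)"

text \<open>alpha = rho e^{i Theta}; the limit |alpha| -> infinity with arg alpha = Theta is rho -> +infinity.\<close>
definition dir_alpha :: "real \<Rightarrow> real \<Rightarrow> complex" where
  "dir_alpha \<Theta> \<rho> = complex_of_real \<rho> * cis \<Theta>"

definition eps_sum_fun :: "real \<Rightarrow> (nat \<Rightarrow> complex) \<Rightarrow> nat set \<Rightarrow> real \<Rightarrow> complex" where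
  "eps_sum_fun \<Theta> a I \<rho> =
     eps_inv (dir_alpha \<Theta> \<rho>) (\<Sum>k\<in>I. eps (dir_alpha \<Theta> \<rho>) (a k))"

definition lim_plus :: "real \<Rightarrow> complex \<Rightarrow> complex \<Rightarrow> complex" where
  "lim_plus \<Theta> a b = Lim at_top (\<lambda>\<rho>. eps_inv (dir_alpha \<Theta> \<rho>)
       (eps (dir_alpha \<Theta> \<rho>) a + eps (dir_alpha \<Theta> \<rho>) b))"

definition level_sum :: "(nat \<Rightarrow> complex) \<Rightarrow> nat \<Rightarrow> nat \<Rightarrow> complex" where
  "level_sum a n k = (\<Sum>t\<in>{t\<in>{1..n}. cmod (a t) = cmod (a k)}. sgn (a t))"

definition r_of :: "(nat \<Rightarrow> complex) \<Rightarrow> nat \<Rightarrow> nat \<Rightarrow> real" where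
  "r_of a n k = cmod (level_sum a n k)"

definition s_of :: "(nat \<Rightarrow> complex) \<Rightarrow> nat \<Rightarrow> nat \<Rightarrow> complex" where
  "s_of a n k = sgn (level_sum a n k)"

definition good_idx :: "(nat \<Rightarrow> complex) \<Rightarrow> nat \<Rightarrow> nat set" where
  "good_idx a n = {k\<in>{1..n}. a k \<noteq> 0 \<and> r_of a n k \<noteq> 0}"

definition limit_value :: "real \<Rightarrow> (nat \<Rightarrow> complex) \<Rightarrow> nat \<Rightarrow> nat \<Rightarrow> complex" where
  "limit_value \<Theta> a n M =
     complex_of_real (cmod (a M)) * (complex_of_real (r_of a n M)) powr (- \<i> * of_real (tan \<Theta>))
     * s_of a n M"

text \<open>Non-associative field on carrier S: all field axioms except associativity of addition.\<close>
definition nonassoc_field :: "'a set \<Rightarrow> ('a \<Rightarrow> 'a \<Rightarrow> 'a) \<Rightarrow> ('a \<Rightarrow> 'a \<Rightarrow> 'a) \<Rightarrow> bool" where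
  "nonassoc_field S add mul \<longleftrightarrow>
     (\<forall>x\<in>S. \<forall>y\<in>S. add x y \<in> S) \<and>
     (\<forall>x\<in>S. \<forall>y\<in>S. mul x y \<in> S) \<and>
     (\<forall>x\<in>S. \<forall>y\<in>S. add x y = add y x) \<and>
     (\<forall>x\<in>S. \<forall>y\<in>S. mul x y = mul y x) \<and>
     (\<forall>x\<in>S. \<forall>y\<in>S. \<forall>z\<in>S. mul (mul x y) z = mul x (mul y z)) \<and>
     (\<forall>x\<in>S. \<forall>y\<in>S. \<forall>z\<in>S. mul x (add y z) = add (mul x y) (mul x z)) \<and>
     (\<exists>z\<in>S. \<exists>u\<in>S. z \<noteq> u \<and>
        (\<forall>x\<in>S. add x z = x) \<and> (\<forall>x\<in>S. mul x u = x) \<and>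
        (\<forall>x\<in>S. \<exists>y\<in>S. add x y = z) \<and>
        (\<forall>x\<in>S. x \<noteq> z \<longrightarrow> (\<exists>y\<in>S. mul x y = u)))"

end

theory Submission
  imports Defs "HOL-Real_Asymp.Real_Asymp"
begin

text \<open>
  Grouping the summands by modulus, \<open>\<Sum>\<^sub>k \<epsilon>\<^sub>\<alpha>(a\<^sub>k) = \<Sum>\<^sub>L L powr \<alpha> * \<sigma>(L)\<close>, where \<open>\<sigma>(L)\<close>
  is the sum of the phases \<open>sgn a\<^sub>k\<close> over the summands of modulus \<open>L\<close>. Along
  \<open>\<alpha> = \<rho> cis \<Theta>\<close> the factor \<open>(L / L\<^sub>0) powr \<alpha>\<close> has modulus \<open>(L / L\<^sub>0) powr (\<rho> cos \<Theta>)\<close>,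
  so relative to the dominant level \<open>L\<^sub>0\<close> (the largest level with \<open>\<sigma>(L) \<noteq> 0\<close> if
  \<open>cos \<Theta> > 0\<close>, the smallest if \<open>cos \<Theta> < 0\<close>) all other levels die out as \<open>\<rho> \<rightarrow> \<infinity>\<close>.
  Since \<open>\<epsilon>\<^sub>\<alpha>\<^sup>-\<^sup>1\<close> is multiplicative and inverts \<open>\<epsilon>\<^sub>\<alpha>\<close>, the factor \<open>L\<^sub>0 powr \<alpha> = \<epsilon>\<^sub>\<alpha>(L\<^sub>0)\<close>
  contributes exactly \<open>L\<^sub>0\<close>, while \<open>\<epsilon>\<^sub>\<alpha>\<^sup>-\<^sup>1\<close> of the rest tends to
  \<open>|\<sigma>(L\<^sub>0)| powr (-\<i> tan \<Theta>) * sgn \<sigma>(L\<^sub>0)\<close>, because the exponent \<open>(1 - \<i> Im \<alpha>) / Re \<alpha>\<close>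
  of \<open>\<epsilon>\<^sub>\<alpha>\<^sup>-\<^sup>1\<close> tends to \<open>-\<i> tan \<Theta>\<close>.
  The case of two summands shows that the limit defining the new addition exists;
  multiplicativity of \<open>\<epsilon>\<^sub>\<alpha>\<close> gives distributivity and oddness gives additive inverses.
\<close>

lemma eps_conv_powr: "eps \<alpha> z = complex_of_real (cmod z) powr \<alpha> * sgn z"
  by (simp add: eps_def)

lemma eps_0 [simp]: "eps \<alpha> 0 = 0"
  and eps_inv_0 [simp]: "eps_inv \<alpha> 0 = 0"
  by (simp_all add: eps_def eps_inv_def)

lemma eps_of_real_pos: "L > 0 \<Longrightarrow> eps \<alpha> (complex_of_real L) = complex_of_real L powr \<alpha>"
  by (simp add: eps_def sgn_of_real)

lemma eps_minus: "eps \<alpha> (- z) = - eps \<alpha> z"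
  by (simp add: eps_def)

lemma eps_mult: "eps \<alpha> (x * y) = eps \<alpha> x * eps \<alpha> y"
  by (simp add: eps_conv_powr norm_mult sgn_mult powr_times_real)

lemma eps_inv_mult: "eps_inv \<alpha> (x * y) = eps_inv \<alpha> x * eps_inv \<alpha> y"
  by (simp add: eps_inv_def norm_mult sgn_mult powr_times_real)

lemma sgn_exp: "sgn (exp z) = exp (\<i> * of_real (Im z))"
proof -
  have "exp z = of_real (exp (Re z)) * exp (\<i> * of_real (Im z))"
    by (metis complex_eq exp_add exp_of_real mult.commute)
  moreover have "sgn (exp (\<i> * of_real (Im z))) = exp (\<i> * of_real (Im z))"
    by (simp add: sgn_eq norm_exp_i_times)
  ultimately show ?thesis
    by (simp add: sgn_mult sgn_of_real)
qed

lemma eps_inv_eps: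
  assumes "Re \<alpha> \<noteq> 0"
  shows "eps_inv \<alpha> (eps \<alpha> z) = z"
proof (cases "z = 0")
  case True
  then show ?thesis by simp
next
  case False
  define r where "r = cmod z"
  have r: "r > 0" using False by (simp add: r_def)
  have eps_z: "eps \<alpha> z = exp (\<alpha> * of_real (ln r)) * sgn z"
    using r by (simp add: eps_def powr_def Ln_of_real r_def)
  have "cmod (eps \<alpha> z) = exp (Re \<alpha> * ln r)"
    using False by (simp add: eps_z norm_mult norm_exp_eq_Re norm_sgn)
  moreover have "sgn (exp (\<alpha> * of_real (ln r))) = exp (\<i> * of_real (Im \<alpha> * ln r))"
    by (simp add: sgn_exp)
  ultimately have "eps_inv \<alpha> (eps \<alpha> z)
      = exp ((1 - \<i> * of_real (Im \<alpha>)) / of_real (Re \<alpha>) * of_real (Re \<alpha> * ln r))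
        * exp (\<i> * of_real (Im \<alpha> * ln r)) * sgn z"
    using False by (simp add: eps_inv_def eps_z sgn_mult powr_def Ln_of_real)
  also have "\<dots> = exp (of_real (ln r)) * sgn z"
    using assms by (simp add: exp_add[symmetric] field_simps)
  finally show ?thesis
    using r False by (simp add: r_def sgn_eq exp_of_real)
qed

lemma eps_inv_eps_mult:
  assumes "Re \<alpha> \<noteq> 0"
  shows "eps_inv \<alpha> (eps \<alpha> c * w) = c * eps_inv \<alpha> w"
  by (simp add: eps_inv_mult eps_inv_eps[OF assms])

lemma eps_Reals: "\<alpha> \<in> \<real> \<Longrightarrow> z \<in> \<real> \<Longrightarrow> eps \<alpha> z \<in> \<real>"
  by (auto simp: eps_def sgn_of_real elim!: Reals_cases intro!: Reals_mult Reals_powr)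

lemma eps_inv_Reals: "Im \<alpha> = 0 \<Longrightarrow> w \<in> \<real> \<Longrightarrow> eps_inv \<alpha> w \<in> \<real>"
  by (auto simp: eps_inv_def sgn_of_real elim!: Reals_cases intro!: Reals_mult Reals_powr)

lemma Re_dir_alpha [simp]: "Re (dir_alpha \<Theta> \<rho>) = \<rho> * cos \<Theta>"
  and Im_dir_alpha [simp]: "Im (dir_alpha \<Theta> \<rho>) = \<rho> * sin \<Theta>"
  by (simp_all add: dir_alpha_def)

lemma tendsto_eps_inv_exponent:
  assumes "cos \<Theta> \<noteq> 0"
  shows "((\<lambda>\<rho>. (1 - \<i> * of_real (Im (dir_alpha \<Theta> \<rho>))) / of_real (Re (dir_alpha \<Theta> \<rho>)))
           \<longlongrightarrow> - \<i> * of_real (tan \<Theta>)) at_top"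
proof -
  have "((\<lambda>\<rho>. 1 / cos \<Theta> * (1 / \<rho>)) \<longlongrightarrow> 0) at_top"
    by (intro tendsto_mult_right_zero) real_asymp
  then have "((\<lambda>\<rho>. complex_of_real (1 / cos \<Theta> * (1 / \<rho>)) - \<i> * of_real (tan \<Theta>))
          \<longlongrightarrow> of_real 0 - \<i> * of_real (tan \<Theta>)) at_top"
    by (intro tendsto_intros)
  moreover have "eventually (\<lambda>\<rho>. complex_of_real (1 / cos \<Theta> * (1 / \<rho>)) - \<i> * of_real (tan \<Theta>)
      = (1 - \<i> * of_real (Im (dir_alpha \<Theta> \<rho>))) / of_real (Re (dir_alpha \<Theta> \<rho>))) at_top"
    using eventually_gt_at_top[of 0] by eventually_elim (use assms in \<open>simp add: tan_def field_simps\<close>)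
  ultimately show ?thesis
    by (simp add: tendsto_cong)
qed

lemma tendsto_eps_inv_dir_alpha:
  assumes "cos \<Theta> \<noteq> 0" and f: "(f \<longlongrightarrow> w) at_top" and "w \<noteq> 0"
  shows "((\<lambda>\<rho>. eps_inv (dir_alpha \<Theta> \<rho>) (f \<rho>))
           \<longlongrightarrow> complex_of_real (cmod w) powr (- \<i> * of_real (tan \<Theta>)) * sgn w) at_top"
proof -
  have "((\<lambda>\<rho>. complex_of_real (cmod (f \<rho>))
            powr ((1 - \<i> * of_real (Im (dir_alpha \<Theta> \<rho>))) / of_real (Re (dir_alpha \<Theta> \<rho>)))
            * sgn (f \<rho>))
         \<longlongrightarrow> complex_of_real (cmod w) powr (- \<i> * of_real (tan \<Theta>)) * sgn w) at_top"
    using assms by (intro tendsto_intros tendsto_eps_inv_exponent) (auto simp: complex_nonpos_Reals_iff)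
  moreover have "eventually (\<lambda>\<rho>. f \<rho> \<noteq> 0) at_top"
    using f \<open>w \<noteq> 0\<close> by (rule tendsto_imp_eventually_ne)
  then have "eventually (\<lambda>\<rho>. complex_of_real (cmod (f \<rho>))
            powr ((1 - \<i> * of_real (Im (dir_alpha \<Theta> \<rho>))) / of_real (Re (dir_alpha \<Theta> \<rho>)))
            * sgn (f \<rho>) = eps_inv (dir_alpha \<Theta> \<rho>) (f \<rho>)) at_top"
    by eventually_elim (simp add: eps_inv_def)
  ultimately show ?thesis
    by (rule Lim_transform_eventually)
qed

lemma tendsto_of_real_powr_dir_alpha_0:
  assumes "q > 0" and "cos \<Theta> * ln q < 0"
  shows "((\<lambda>\<rho>. complex_of_real q powr dir_alpha \<Theta> \<rho>) \<longlongrightarrow> 0) at_top"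
proof (rule tendsto_norm_zero_cancel)
  have "norm (complex_of_real q powr dir_alpha \<Theta> \<rho>) = exp (\<rho> * (cos \<Theta> * ln q))" for \<rho>
    using assms(1) by (simp add: norm_powr_real)
  moreover have "((\<lambda>\<rho>. exp (\<rho> * c)) \<longlongrightarrow> 0) at_top" if "c < 0" for c :: real
    using that by real_asymp
  ultimately show "((\<lambda>\<rho>. norm (complex_of_real q powr dir_alpha \<Theta> \<rho>)) \<longlongrightarrow> 0) at_top"
    using assms(2) by simp
qed

definition level_sgn_sum :: "(nat \<Rightarrow> complex) \<Rightarrow> nat set \<Rightarrow> real \<Rightarrow> complex" where
  "level_sgn_sum a I L = (\<Sum>k\<in>{k\<in>I. cmod (a k) = L}. sgn (a k))"

lemma level_sum_conv_level_sgn_sum: "level_sum a n k = level_sgn_sum a {1..n} (cmod (a k))"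
  by (simp add: level_sum_def level_sgn_sum_def)

lemma sum_eps_by_levels:
  assumes "finite I"
  shows "(\<Sum>k\<in>I. eps \<alpha> (a k))
           = (\<Sum>L\<in>(\<lambda>k. cmod (a k)) ` I. complex_of_real L powr \<alpha> * level_sgn_sum a I L)"
proof -
  have "(\<Sum>k\<in>I. eps \<alpha> (a k))
          = (\<Sum>L\<in>(\<lambda>k. cmod (a k)) ` I. \<Sum>k\<in>{k\<in>I. cmod (a k) = L}. eps \<alpha> (a k))"
    by (rule sum.image_gen[OF assms])
  also have "\<dots> = (\<Sum>L\<in>(\<lambda>k. cmod (a k)) ` I. complex_of_real L powr \<alpha> * level_sgn_sum a I L)"
    unfolding level_sgn_sum_def sum_distrib_left
    by (intro sum.cong refl) (simp add: eps_conv_powr)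
  finally show ?thesis .
qed

lemma tendsto_eps_sum_fun_dominant_level:
  fixes a :: "nat \<Rightarrow> complex" and I :: "nat set"
  defines "\<sigma> \<equiv> level_sgn_sum a I"
  assumes "finite I" and "cos \<Theta> \<noteq> 0" and "L0 > 0" and "\<sigma> L0 \<noteq> 0"
    and dominant: "\<And>k. k \<in> I \<Longrightarrow> a k \<noteq> 0 \<Longrightarrow> \<sigma> (cmod (a k)) \<noteq> 0 \<Longrightarrow> cmod (a k) \<noteq> L0
                     \<Longrightarrow> cos \<Theta> * ln (cmod (a k) / L0) < 0"
  shows "(eps_sum_fun \<Theta> a I \<longlongrightarrow> complex_of_real L0
           * complex_of_real (cmod (\<sigma> L0)) powr (- \<i> * of_real (tan \<Theta>)) * sgn (\<sigma> L0)) at_top"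
proof -
  let ?\<alpha> = "dir_alpha \<Theta>" and ?levels = "(\<lambda>k. cmod (a k)) ` I"
  define T where "T \<rho> = (\<Sum>L\<in>?levels. complex_of_real (L / L0) powr ?\<alpha> \<rho> * \<sigma> L)" for \<rho>
  have "((\<lambda>\<rho>. complex_of_real (L / L0) powr ?\<alpha> \<rho> * \<sigma> L) \<longlongrightarrow> (if L = L0 then \<sigma> L0 else 0)) at_top"
    if "L \<in> ?levels" for L
  proof (cases "L = L0 \<or> L = 0 \<or> \<sigma> L = 0")
    case True
    then show ?thesis using \<open>L0 > 0\<close> by auto
  next
    case False
    with that obtain k where "k \<in> I" "a k \<noteq> 0" "L = cmod (a k)" by auto
    then have "cos \<Theta> * ln (L / L0) < 0" using dominant False by auto
    then have "((\<lambda>\<rho>. complex_of_real (L / L0) powr ?\<alpha> \<rho>) \<longlongrightarrow> 0) at_top"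
      using \<open>L0 > 0\<close> \<open>a k \<noteq> 0\<close> \<open>L = cmod (a k)\<close>
      by (intro tendsto_of_real_powr_dir_alpha_0) auto
    then show ?thesis using False by (simp add: tendsto_mult_left_zero)
  qed
  then have "(T \<longlongrightarrow> (\<Sum>L\<in>?levels. if L = L0 then \<sigma> L0 else 0)) at_top"
    unfolding T_def by (rule tendsto_sum)
  moreover have "L0 \<in> ?levels"
  proof (rule ccontr)
    assume "L0 \<notin> ?levels"
    then have "{k\<in>I. cmod (a k) = L0} = {}" by auto
    then show False
      using \<open>\<sigma> L0 \<noteq> 0\<close> unfolding \<sigma>_def level_sgn_sum_def by (simp only: sum.empty)
  qed
  ultimately have T_lim: "(T \<longlongrightarrow> \<sigma> L0) at_top"
    using \<open>finite I\<close> by (simp add: sum.delta)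
  have "eventually (\<lambda>\<rho>. complex_of_real L0 * eps_inv (?\<alpha> \<rho>) (T \<rho>) = eps_sum_fun \<Theta> a I \<rho>) at_top"
    using eventually_gt_at_top[of 0]
  proof eventually_elim
    case (elim \<rho>)
    have "complex_of_real L powr ?\<alpha> \<rho> = eps (?\<alpha> \<rho>) (of_real L0) * complex_of_real (L / L0) powr ?\<alpha> \<rho>"
      if "L \<in> ?levels" for L
    proof -
      have "complex_of_real L powr ?\<alpha> \<rho> = (of_real L0 * of_real (L / L0)) powr ?\<alpha> \<rho>"
        using \<open>L0 > 0\<close> by simp
      also have "\<dots> = of_real L0 powr ?\<alpha> \<rho> * of_real (L / L0) powr ?\<alpha> \<rho>"
        using that \<open>L0 > 0\<close> by (intro powr_times_real) auto
      finally show ?thesis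
        using \<open>L0 > 0\<close> by (simp add: eps_of_real_pos)
    qed
    then have "(\<Sum>k\<in>I. eps (?\<alpha> \<rho>) (a k)) = eps (?\<alpha> \<rho>) (of_real L0) * T \<rho>"
      by (simp add: sum_eps_by_levels[OF \<open>finite I\<close>] T_def sum_distrib_left \<sigma>_def mult.assoc)
    then show ?case
      using elim \<open>cos \<Theta> \<noteq> 0\<close> by (simp add: eps_sum_fun_def eps_inv_eps_mult)
  qed
  moreover have "((\<lambda>\<rho>. complex_of_real L0 * eps_inv (?\<alpha> \<rho>) (T \<rho>)) \<longlongrightarrow> complex_of_real L0
      * (complex_of_real (cmod (\<sigma> L0)) powr (- \<i> * of_real (tan \<Theta>)) * sgn (\<sigma> L0))) at_top"
    using assms T_lim by (intro tendsto_mult_left tendsto_eps_inv_dir_alpha)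
  ultimately show ?thesis
    by (simp add: Lim_transform_eventually mult.assoc)
qed

lemma good_idx_same_level:
  assumes "k \<in> good_idx a n" and "cmod (a M) = cmod (a k)" and "M \<in> {1..n}"
  shows "M \<in> good_idx a n"
  using assms by (auto simp: good_idx_def r_of_def level_sum_def)

lemma tendsto_eps_sum_fun_good_idx:
  assumes "cos \<Theta> \<noteq> 0" and "M \<in> good_idx a n"
    and dominant: "\<And>k. k \<in> good_idx a n \<Longrightarrow> cmod (a k) \<noteq> cmod (a M)
                     \<Longrightarrow> cos \<Theta> * ln (cmod (a k) / cmod (a M)) < 0"
  shows "(eps_sum_fun \<Theta> a {1..n} \<longlongrightarrow> limit_value \<Theta> a n M) at_top"
  using tendsto_eps_sum_fun_dominant_level[of "{1..n}" \<Theta> "cmod (a M)" a] assms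
  by (simp add: good_idx_def limit_value_def r_of_def s_of_def level_sum_conv_level_sgn_sum)

lemma tendsto_eps_sum_fun_Max:
  assumes "cos \<Theta> > 0" and "good_idx a n \<noteq> {}" and "M \<in> {1..n}"
    and M: "cmod (a M) = Max ((\<lambda>k. cmod (a k)) ` good_idx a n)"
  shows "(eps_sum_fun \<Theta> a {1..n} \<longlongrightarrow> limit_value \<Theta> a n M) at_top"
proof (rule tendsto_eps_sum_fun_good_idx)
  have "finite (good_idx a n)" by (simp add: good_idx_def)
  then have "Max ((\<lambda>k. cmod (a k)) ` good_idx a n) \<in> (\<lambda>k. cmod (a k)) ` good_idx a n"
    using \<open>good_idx a n \<noteq> {}\<close> by (intro Max_in) auto
  then obtain k where "k \<in> good_idx a n" "cmod (a M) = cmod (a k)"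
    using M by auto
  then show "M \<in> good_idx a n"
    using \<open>M \<in> {1..n}\<close> by (rule good_idx_same_level)
  fix k assume k: "k \<in> good_idx a n" "cmod (a k) \<noteq> cmod (a M)"
  have "cmod (a k) \<le> cmod (a M)"
    unfolding M using \<open>finite (good_idx a n)\<close> k(1) by (intro Max_ge) auto
  moreover have "0 < cmod (a k)"
    using k(1) by (simp add: good_idx_def)
  ultimately have "0 < cmod (a k) / cmod (a M)" "cmod (a k) / cmod (a M) < 1"
    using k(2) by (auto simp: divide_less_eq_1 zero_less_divide_iff)
  then have "ln (cmod (a k) / cmod (a M)) < 0"
    by simp
  then show "cos \<Theta> * ln (cmod (a k) / cmod (a M)) < 0"
    using \<open>cos \<Theta> > 0\<close> by (simp add: mult_pos_neg)
qed (use assms in simp)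

lemma tendsto_eps_sum_fun_Min:
  assumes "cos \<Theta> < 0" and "good_idx a n \<noteq> {}" and "m \<in> {1..n}"
    and m: "cmod (a m) = Min ((\<lambda>k. cmod (a k)) ` good_idx a n)"
  shows "(eps_sum_fun \<Theta> a {1..n} \<longlongrightarrow> limit_value \<Theta> a n m) at_top"
proof (rule tendsto_eps_sum_fun_good_idx)
  have "finite (good_idx a n)" by (simp add: good_idx_def)
  then have "Min ((\<lambda>k. cmod (a k)) ` good_idx a n) \<in> (\<lambda>k. cmod (a k)) ` good_idx a n"
    using \<open>good_idx a n \<noteq> {}\<close> by (intro Min_in) auto
  then obtain k where "k \<in> good_idx a n" "cmod (a m) = cmod (a k)"
    using m by auto
  then show "m \<in> good_idx a n"
    using \<open>m \<in> {1..n}\<close> by (rule good_idx_same_level)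
  fix k assume k: "k \<in> good_idx a n" "cmod (a k) \<noteq> cmod (a m)"
  have "cmod (a m) \<le> cmod (a k)"
    unfolding m using \<open>finite (good_idx a n)\<close> k(1) by (intro Min_le) auto
  moreover have "0 < cmod (a m)"
    using \<open>m \<in> good_idx a n\<close> by (simp add: good_idx_def)
  ultimately have "1 < cmod (a k) / cmod (a m)"
    using k(2) by simp
  then have "ln (cmod (a k) / cmod (a m)) > 0"
    by simp
  then show "cos \<Theta> * ln (cmod (a k) / cmod (a m)) < 0"
    using \<open>cos \<Theta> < 0\<close> by (simp add: mult_neg_pos)
qed (use assms in simp)

lemma eps_sum_fun_good_idx_empty:
  assumes "good_idx a n = {}"
  shows "eps_sum_fun \<Theta> a {1..n} = (\<lambda>_. 0)"
proof -
  have level_terms: "complex_of_real L powr \<alpha> * level_sgn_sum a {1..n} L = 0"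
    if "L \<in> (\<lambda>k. cmod (a k)) ` {1..n}" for L \<alpha>
    using that assms
    by (auto simp: good_idx_def r_of_def level_sum_conv_level_sgn_sum)
  have "(\<Sum>k\<in>{1..n}. eps \<alpha> (a k)) = 0" for \<alpha>
    unfolding sum_eps_by_levels[OF finite_atLeastAtMost] by (rule sum.neutral) (use level_terms in blast)
  then show ?thesis
    by (simp add: eps_sum_fun_def fun_eq_iff)
qed

lemma eps_sum_fun_convergent:
  assumes "cos \<Theta> \<noteq> 0"
  shows "\<exists>l. (eps_sum_fun \<Theta> a {1..n} \<longlongrightarrow> l) at_top"
proof (cases "good_idx a n = {}")
  case True
  then show ?thesis
    unfolding eps_sum_fun_good_idx_empty[OF True] by auto
next
  case False
  have levels: "finite ((\<lambda>k. cmod (a k)) ` good_idx a n)" "(\<lambda>k. cmod (a k)) ` good_idx a n \<noteq> {}"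
    using False by (simp_all add: good_idx_def)
  show ?thesis
  proof (cases "cos \<Theta> > 0")
    case True
    obtain M where "M \<in> good_idx a n" "cmod (a M) = Max ((\<lambda>k. cmod (a k)) ` good_idx a n)"
      using Max_in[OF levels] by (metis imageE)
    then show ?thesis
      using tendsto_eps_sum_fun_Max[OF True False] by (auto simp: good_idx_def)
  next
    case False
    then have "cos \<Theta> < 0" using assms by simp
    obtain m where "m \<in> good_idx a n" "cmod (a m) = Min ((\<lambda>k. cmod (a k)) ` good_idx a n)"
      using Min_in[OF levels] by (metis imageE)
    then show ?thesis
      using tendsto_eps_sum_fun_Min[OF \<open>cos \<Theta> < 0\<close> \<open>good_idx a n \<noteq> {}\<close>]
      by (auto simp: good_idx_def)
  qed
qed

definition eps_plus :: "real \<Rightarrow> complex \<Rightarrow> complex \<Rightarrow> real \<Rightarrow> complex" where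
  "eps_plus \<Theta> x y \<rho> = eps_inv (dir_alpha \<Theta> \<rho>) (eps (dir_alpha \<Theta> \<rho>) x + eps (dir_alpha \<Theta> \<rho>) y)"

lemma lim_plus_conv_Lim: "lim_plus \<Theta> x y = Lim at_top (eps_plus \<Theta> x y)"
  by (simp add: lim_plus_def eps_plus_def[abs_def])

lemma lim_plus_eqI:
  assumes "(eps_plus \<Theta> x y \<longlongrightarrow> l) at_top"
  shows "lim_plus \<Theta> x y = l"
  unfolding lim_plus_conv_Lim using assms by (rule tendsto_Lim[rotated]) simp

lemma tendsto_lim_plus:
  assumes "cos \<Theta> \<noteq> 0"
  shows "(eps_plus \<Theta> x y \<longlongrightarrow> lim_plus \<Theta> x y) at_top"
proof -
  define a where "a k = (if k = 1 then x else y)" for k :: nat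
  have "{1..2::nat} = {1, 2}" by auto
  then have "eps_sum_fun \<Theta> a {1..2} = eps_plus \<Theta> x y"
    by (simp add: eps_sum_fun_def eps_plus_def a_def fun_eq_iff)
  then obtain l where "(eps_plus \<Theta> x y \<longlongrightarrow> l) at_top"
    using eps_sum_fun_convergent[OF assms, of a 2] by auto
  moreover from this have "lim_plus \<Theta> x y = l"
    by (rule lim_plus_eqI)
  ultimately show ?thesis by simp
qed

lemma lim_plus_commute: "lim_plus \<Theta> x y = lim_plus \<Theta> y x"
  unfolding lim_plus_def by (subst add.commute) (rule refl)

lemma lim_plus_0_right:
  assumes "cos \<Theta> \<noteq> 0"
  shows "lim_plus \<Theta> x 0 = x"
proof (rule lim_plus_eqI)
  have "eventually (\<lambda>\<rho>. x = eps_plus \<Theta> x 0 \<rho>) at_top"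
    using eventually_gt_at_top[of 0]
    by eventually_elim (use assms in \<open>simp add: eps_plus_def eps_inv_eps\<close>)
  then show "(eps_plus \<Theta> x 0 \<longlongrightarrow> x) at_top"
    by (rule Lim_transform_eventually[OF tendsto_const])
qed

lemma lim_plus_minus_right: "lim_plus \<Theta> x (- x) = 0"
  by (rule lim_plus_eqI) (simp add: eps_plus_def[abs_def] eps_minus)

lemma mult_lim_plus:
  assumes "cos \<Theta> \<noteq> 0"
  shows "c * lim_plus \<Theta> x y = lim_plus \<Theta> (c * x) (c * y)"
proof (rule sym, rule lim_plus_eqI)
  have "((\<lambda>\<rho>. c * eps_plus \<Theta> x y \<rho>) \<longlongrightarrow> c * lim_plus \<Theta> x y) at_top"
    using assms by (intro tendsto_mult_left tendsto_lim_plus)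
  moreover have "eventually (\<lambda>\<rho>. c * eps_plus \<Theta> x y \<rho> = eps_plus \<Theta> (c * x) (c * y) \<rho>) at_top"
    using eventually_gt_at_top[of 0]
    by eventually_elim
      (use assms in \<open>simp add: eps_plus_def eps_mult eps_inv_eps_mult flip: distrib_left\<close>)
  ultimately show "(eps_plus \<Theta> (c * x) (c * y) \<longlongrightarrow> c * lim_plus \<Theta> x y) at_top"
    by (rule Lim_transform_eventually)
qed

lemma lim_plus_Reals:
  assumes "x \<in> \<real>" and "y \<in> \<real>" and "sin \<Theta> = 0" and "cos \<Theta> \<noteq> 0"
  shows "lim_plus \<Theta> x y \<in> \<real>"
proof (rule Lim_in_closed_set[OF closed_complex_Reals _ _ tendsto_lim_plus[OF assms(4)]])
  have "eps_plus \<Theta> x y \<rho> \<in> \<real>" for \<rho>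
    unfolding eps_plus_def using assms
    by (intro eps_inv_Reals Reals_add eps_Reals) (simp_all add: complex_is_Real_iff)
  then show "eventually (\<lambda>\<rho>. eps_plus \<Theta> x y \<rho> \<in> \<real>) at_top"
    by simp
qed simp

lemma nonassoc_field_lim_plus:
  assumes "cos \<Theta> \<noteq> 0" and F: "F = UNIV \<or> (F = \<real> \<and> sin \<Theta> = 0)"
  shows "nonassoc_field F (lim_plus \<Theta>) (*)"
  unfolding nonassoc_field_def
proof (intro conjI ballI)
  fix x y assume "x \<in> F" "y \<in> F"
  then show "lim_plus \<Theta> x y \<in> F" "x * y \<in> F"
    using F lim_plus_Reals assms(1) by auto
next
  show "\<exists>z\<in>F. \<exists>u\<in>F. z \<noteq> u \<and> (\<forall>x\<in>F. lim_plus \<Theta> x z = x) \<and> (\<forall>x\<in>F. x * u = x) \<and>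
      (\<forall>x\<in>F. \<exists>y\<in>F. lim_plus \<Theta> x y = z) \<and> (\<forall>x\<in>F. x \<noteq> z \<longrightarrow> (\<exists>y\<in>F. x * y = u))"
  proof (rule bexI[of _ 0], rule bexI[of _ 1], intro conjI ballI impI)
    fix x assume "x \<in> F"
    show "\<exists>y\<in>F. lim_plus \<Theta> x y = 0"
      by (rule bexI[of _ "- x"]) (use \<open>x \<in> F\<close> F lim_plus_minus_right in auto)
    assume "x \<noteq> 0"
    then show "\<exists>y\<in>F. x * y = 1"
      using \<open>x \<in> F\<close> F by (intro bexI[of _ "inverse x"]) auto
  qed (use F assms(1) lim_plus_0_right in auto)
qed (simp_all add: lim_plus_commute mult_lim_plus assms(1) mult_ac)

theorem mainTheorem5:
  fixes F :: "complex set" and \<Theta> :: real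
  shows
  "(((F = UNIV \<and> cos \<Theta> > 0) \<or> (F = \<real> \<and> \<Theta> = 0)) \<longrightarrow>
      nonassoc_field F (lim_plus \<Theta>) (*) \<and>
      (\<forall>(a :: nat \<Rightarrow> complex) n. (\<forall>k\<in>{1..n}. a k \<in> F) \<longrightarrow>
         (good_idx a n \<noteq> {} \<longrightarrow>
            (\<forall>M\<in>{1..n}. cmod (a M) = Max ((\<lambda>k. cmod (a k)) ` good_idx a n) \<longrightarrow>
               (eps_sum_fun \<Theta> a {1..n} \<longlongrightarrow> limit_value \<Theta> a n M) at_top)) \<and>
         (good_idx a n = {} \<longrightarrow> (eps_sum_fun \<Theta> a {1..n} \<longlongrightarrow> 0) at_top)))
   \<and>
   (((F = UNIV \<and> cos \<Theta> < 0) \<or> (F = \<real> \<and> \<Theta> = pi)) \<longrightarrow>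
      nonassoc_field F (lim_plus \<Theta>) (*) \<and>
      (\<forall>(a :: nat \<Rightarrow> complex) n. (\<forall>k\<in>{1..n}. a k \<in> F) \<longrightarrow>
         (good_idx a n \<noteq> {} \<longrightarrow>
            (\<forall>m\<in>{1..n}. cmod (a m) = Min ((\<lambda>k. cmod (a k)) ` good_idx a n) \<longrightarrow>
               (eps_sum_fun \<Theta> a {1..n} \<longlongrightarrow> limit_value \<Theta> a n m) at_top)) \<and>
         (good_idx a n = {} \<longrightarrow> (eps_sum_fun \<Theta> a {1..n} \<longlongrightarrow> 0) at_top)))"
proof (intro conjI impI allI ballI)
  assume F: "(F = UNIV \<and> cos \<Theta> > 0) \<or> (F = \<real> \<and> \<Theta> = 0)"
  then show "nonassoc_field F (lim_plus \<Theta>) (*)"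
    by (intro nonassoc_field_lim_plus) auto
  fix a n M
  assume "good_idx a n \<noteq> {}" "M \<in> {1..n}" "cmod (a M) = Max ((\<lambda>k. cmod (a k)) ` good_idx a n)"
  then show "(eps_sum_fun \<Theta> a {1..n} \<longlongrightarrow> limit_value \<Theta> a n M) at_top"
    using F by (intro tendsto_eps_sum_fun_Max) auto
next
  assume F: "(F = UNIV \<and> cos \<Theta> < 0) \<or> (F = \<real> \<and> \<Theta> = pi)"
  then show "nonassoc_field F (lim_plus \<Theta>) (*)"
    by (intro nonassoc_field_lim_plus) auto
  fix a n m
  assume "good_idx a n \<noteq> {}" "m \<in> {1..n}" "cmod (a m) = Min ((\<lambda>k. cmod (a k)) ` good_idx a n)"
  then show "(eps_sum_fun \<Theta> a {1..n} \<longlongrightarrow> limit_value \<Theta> a n m) at_top"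
    using F by (intro tendsto_eps_sum_fun_Min) auto
qed (simp_all only: eps_sum_fun_good_idx_empty tendsto_const)

end
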